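(* Let $(G,\ell)$ be an instance of \textsc{Geometric Thickness} with $\ell\ge 2$, let $F$ be a minimum feedback edge set of $G$ of size $k$, and let $G_j$ be the graph constructed as follows. Let $G'$ be obtained from $G$ by exhaustively deleting vertices of degree $0$ or $1$; let $T$ be the forest with $V(T)=V(G')$ and $E(T)=E(G')\setminus F$; let $C$ be the union of $\{v\in V(T):\deg_T(v)\ge 3\}$ and the set of endpoints of edges of $F$; decompose $T$ into the $x$ edge-disjoint paths whose endpoints lie in $C$ and whose internal vertices lie outside $C$, and order them by length as $P_1,\dots,P_x$ with $|E(P_1)|\le\dots\le|E(P_x)|$; let $G_0=(C,F)$ and $G_i=G_0\cup P_1\cup\dots\cup P_i$ for $i\in[x]$; finally let $j$ be the smallest element of $\{0,\dots,x-1\}$ with $|E(P_{j+1})|>2(|E(G_j)|+x)$ if such an element exists, and $j=x$ otherwise. Then $G_j$ has at most $10k\cdot 81^k$ vertices.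
   Context: A feedback edge set of $G$ is a set of edges whose removal makes $G$ acyclic. \textsc{Geometric Thickness}: given a graph $G$ and integer $\ell$, decide whether there is a straight-line drawing of $G$ with an edge coloring in $[\ell]$ such that no two same-colored edges cross. *)

theory Defs
  imports Main
begin

definition simple_graph :: "'a set \<Rightarrow> 'a set set \<Rightarrow> bool" where
  "simple_graph V E \<longleftrightarrow> finite V \<and>
     (\<forall>e\<in>E. \<exists>u v. u \<noteq> v \<and> e = {u, v} \<and> u \<in> V \<and> v \<in> V)"

definition deg :: "'a set set \<Rightarrow> 'a \<Rightarrow> nat" where
  "deg E v = card {e \<in> E. v \<in> e}"

definition is_cycle :: "'a set set \<Rightarrow> 'a list \<Rightarrow> bool" where
  "is_cycle E cs \<longleftrightarrow> length cs \<ge> 3 \<and> distinct cs \<and>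
     (\<forall>i < length cs. {cs ! i, cs ! ((i + 1) mod length cs)} \<in> E)"

definition graph_acyclic :: "'a set set \<Rightarrow> bool" where
  "graph_acyclic E \<longleftrightarrow> \<not> (\<exists>cs. is_cycle E cs)"

definition feedback_edge_set :: "'a set set \<Rightarrow> 'a set set \<Rightarrow> bool" where
  "feedback_edge_set E F \<longleftrightarrow> F \<subseteq> E \<and> graph_acyclic (E - F)"

definition min_feedback_edge_set :: "'a set set \<Rightarrow> 'a set set \<Rightarrow> bool" where
  "min_feedback_edge_set E F \<longleftrightarrow> feedback_edge_set E F \<and>
     (\<forall>F'. feedback_edge_set E F' \<longrightarrow> card F \<le> card F')"

inductive prune_step :: "'a set \<times> 'a set set \<Rightarrow> 'a set \<times> 'a set set \<Rightarrow> bool" where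
  "v \<in> V \<Longrightarrow> deg E v \<le> 1 \<Longrightarrow> prune_step (V, E) (V - {v}, {e \<in> E. v \<notin> e})"

definition pruned_result :: "'a set \<Rightarrow> 'a set set \<Rightarrow> 'a set \<Rightarrow> 'a set set \<Rightarrow> bool" where
  "pruned_result V E V' E' \<longleftrightarrow> prune_step\<^sup>*\<^sup>* (V, E) (V', E') \<and> (\<forall>v\<in>V'. deg E' v \<ge> 2)"

definition path_edges :: "'a list \<Rightarrow> 'a set set" where
  "path_edges p = {{p ! i, p ! Suc i} | i. Suc i < length p}"

definition C_path :: "'a set set \<Rightarrow> 'a set \<Rightarrow> 'a list \<Rightarrow> bool" where
  "C_path T C p \<longleftrightarrow> length p \<ge> 2 \<and> distinct p \<and> path_edges p \<subseteq> T \<and>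
     hd p \<in> C \<and> last p \<in> C \<and> (\<forall>i. 0 < i \<and> i < length p - 1 \<longrightarrow> p ! i \<notin> C)"

end

(*
  Let T = E(G') - F, a forest. Since G' has minimum degree 2, every leaf of T is an endpoint
  of an edge of F, and by the handshake lemma a forest has no more vertices of degree at
  least 3 than leaves; hence |C| <= 4k. An inner vertex of a C-path has degree 2 in T, so
  distinct paths of the decomposition share no inner vertex, and counting the edges of the
  forest T gives x <= |C|. Before the threshold j each path is at most twice as long as
  |E(G_i)| + x, so |E(G_i)| + x at most triples per step, and with j <= x <= 4k this gives
  |V(G_j)| <= |C| + 3^j (k + x) <= 10k 81^k.
*)
theory Submission
  imports Defs
begin

definition two_uniform :: "'a set set \<Rightarrow> bool" where
  "two_uniform E \<longleftrightarrow> (\<forall>e\<in>E. card e = 2)"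

lemma two_uniformD:
  assumes "two_uniform E" "e \<in> E"
  obtains u v where "u \<noteq> v" "e = {u, v}"
  using assms unfolding two_uniform_def card_2_iff by blast

lemma two_uniform_subset: "two_uniform E \<Longrightarrow> E' \<subseteq> E \<Longrightarrow> two_uniform E'"
  unfolding two_uniform_def by blast

lemma finite_Union_two_uniform:
  assumes "finite E" "two_uniform E"
  shows "finite (\<Union>E)"
  using assms unfolding two_uniform_def by (metis card.infinite finite_Union zero_neq_numeral)

lemma card_Union_two_uniform_le:
  assumes "two_uniform E"
  shows "card (\<Union>E) \<le> 2 * card E"
proof -
  have "card (\<Union>E) \<le> sum card E" by (rule card_Union_le_sum_card)
  also have "\<dots> = 2 * card E" using assms unfolding two_uniform_def by simp
  finally show ?thesis .
qed

lemma simple_graphD: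
  assumes "simple_graph V E"
  shows "finite E" "two_uniform E" "\<Union>E \<subseteq> V"
proof -
  have "E \<subseteq> Pow V" "finite V" using assms unfolding simple_graph_def by auto
  then show "finite E" by (meson finite_Pow_iff finite_subset)
  show "two_uniform E" "\<Union>E \<subseteq> V" using assms unfolding simple_graph_def two_uniform_def by auto
qed

lemma deg_pos_iff: "finite E \<Longrightarrow> 0 < deg E v \<longleftrightarrow> v \<in> \<Union>E"
  unfolding deg_def by (fastforce simp: card_gt_0_iff)

lemma deg_Diff_eq:
  assumes "v \<notin> \<Union>F"
  shows "deg (E - F) v = deg E v"
  unfolding deg_def using assms by (metis (lifting) DiffE DiffI UnionI)

lemma handshake:
  assumes "finite E" "two_uniform E"
  shows "(\<Sum>v\<in>\<Union>E. deg E v) = 2 * card E"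
proof -
  have "(\<Sum>v\<in>\<Union>E. card {e \<in> E. v \<in> e}) = (\<Sum>e\<in>E. 2)"
  proof (rule sum_multicount_gen[OF finite_Union_two_uniform[OF assms] assms(1)], intro ballI)
    fix e assume "e \<in> E"
    then have "{v \<in> \<Union>E. v \<in> e} = e" by blast
    then show "card {v \<in> \<Union>E. v \<in> e} = 2" using assms(2) \<open>e \<in> E\<close> unfolding two_uniform_def by simp
  qed
  then show ?thesis unfolding deg_def by simp
qed

lemma exists_other_neighbour:
  assumes "finite E" "two_uniform E" "2 \<le> deg E w"
  obtains c where "c \<noteq> w" "c \<noteq> u" "{w, c} \<in> E"
proof -
  have "\<not> {e \<in> E. w \<in> e} \<subseteq> {{w, u}}"
  proof
    assume "{e \<in> E. w \<in> e} \<subseteq> {{w, u}}"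
    then have "deg E w \<le> 1" unfolding deg_def using card_mono[of "{{w, u}}"] by fastforce
    then show False using assms(3) by simp
  qed
  then obtain e where e: "e \<in> E" "w \<in> e" "e \<noteq> {w, u}" by blast
  obtain a b where "a \<noteq> b" "e = {a, b}" using two_uniformD[OF assms(2) e(1)] .
  then obtain c where "c \<noteq> w" "e = {w, c}" using e(2)
    by (metis insert_commute insertE singletonD)
  then show ?thesis using that e by blast
qed

lemma path_edges_conv_image: "path_edges p = (\<lambda>i. {p ! i, p ! Suc i}) ` {..< length p - 1}"
  unfolding path_edges_def by auto

lemma path_edges_singleton [simp]: "path_edges [a] = {}"
  unfolding path_edges_def by auto

lemma path_edges_Cons_Cons [simp]: "path_edges (a # b # p) = insert {a, b} (path_edges (b # p))"
  unfolding path_edges_conv_image by (simp add: lessThan_Suc_eq_insert_0 image_image)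

lemma path_edges_nth: "Suc i < length p \<Longrightarrow> {p ! i, p ! Suc i} \<in> path_edges p"
  unfolding path_edges_def by blast

lemma finite_path_edges [simp]: "finite (path_edges p)"
  unfolding path_edges_conv_image by simp

lemma card_path_edges:
  assumes "distinct p"
  shows "card (path_edges p) = length p - 1"
proof -
  have "inj_on (\<lambda>i. {p ! i, p ! Suc i}) {..< length p - 1}"
  proof (rule inj_onI)
    fix i j assume "i \<in> {..< length p - 1}" "j \<in> {..< length p - 1}"
      and "{p ! i, p ! Suc i} = {p ! j, p ! Suc j}"
    then show "i = j" using nth_eq_iff_index_eq[OF assms] by (auto simp: doubleton_eq_iff)
  qed
  then show ?thesis unfolding path_edges_conv_image by (simp add: card_image)
qed

lemma cycle_of_back_edge:
  assumes "distinct p" "path_edges p \<subseteq> E" "2 \<le> i" "i < length p" "{p ! i, p ! 0} \<in> E"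
  shows "is_cycle E (take (Suc i) p)"
  unfolding is_cycle_def
proof (intro conjI allI impI)
  let ?cs = "take (Suc i) p"
  have len: "length ?cs = Suc i" using assms(4) by simp
  show "3 \<le> length ?cs" "distinct ?cs" using len assms(1,3) by simp_all
  fix t assume "t < length ?cs"
  then consider "t = i" | "t < i" using len by linarith
  then show "{?cs ! t, ?cs ! ((t + 1) mod length ?cs)} \<in> E"
  proof cases
    case 1
    then show ?thesis using assms(5) len by simp
  next
    case 2
    then have "{p ! t, p ! Suc t} \<in> E" using assms(2,4) path_edges_nth[of t p] by auto
    then show ?thesis using 2 len by simp
  qed
qed

(* A longest path cannot be extended at its first vertex w, so the second neighbour of w
   lies on the path and closes a cycle. *)
lemma min_deg_2_imp_cycle:
  assumes "finite E" "two_uniform E" "E \<noteq> {}" "\<forall>v\<in>\<Union>E. 2 \<le> deg E v"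
  shows "\<exists>cs. is_cycle E cs"
proof -
  define S where "S = {p. distinct p \<and> set p \<subseteq> \<Union>E \<and> path_edges p \<subseteq> E}"
  have "S \<subseteq> {p. set p \<subseteq> \<Union>E \<and> length p \<le> card (\<Union>E)}"
    unfolding S_def using finite_Union_two_uniform[OF assms(1,2)]
    by (auto simp: card_mono simp flip: distinct_card)
  then have "finite S"
    using finite_lists_length_le[OF finite_Union_two_uniform[OF assms(1,2)]] finite_subset by blast
  obtain a b where ab: "{a, b} \<in> E" "a \<noteq> b" using assms(2,3) by (metis equals0I two_uniformD)
  then have "[a, b] \<in> S" unfolding S_def by auto
  then obtain p where "p \<in> S" and longest: "\<And>q. q \<in> S \<Longrightarrow> length q \<le> length p"
    using Max_in[of "length ` S"] Max_ge[of "length ` S"] \<open>finite S\<close> by fastforce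
  have "2 \<le> length p" using longest[OF \<open>[a, b] \<in> S\<close>] by simp
  then obtain w u rest where p: "p = w # u # rest" by (metis Suc_le_length_iff numeral_2_eq_2)
  have p_path: "distinct p" "set p \<subseteq> \<Union>E" "path_edges p \<subseteq> E" using \<open>p \<in> S\<close> unfolding S_def by auto
  have "2 \<le> deg E w" using assms(4) p_path(2) p by auto
  then obtain c where c: "c \<noteq> w" "c \<noteq> u" "{w, c} \<in> E"
    using exists_other_neighbour[OF assms(1,2)] by blast
  have "c \<in> set p"
  proof (rule ccontr)
    assume "c \<notin> set p"
    then have "c # p \<in> S" using p_path c(3) p unfolding S_def by (auto simp: insert_commute)
    then show False using longest by fastforce
  qed
  then obtain i where i: "i < length p" "p ! i = c" by (meson in_set_conv_nth)
  have "2 \<le> i" using i c p by (cases i; cases "i - 1") auto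
  moreover have "{p ! i, p ! 0} \<in> E" using i c p by (simp add: insert_commute)
  ultimately show ?thesis using cycle_of_back_edge p_path i by blast
qed

lemma graph_acyclic_subset: "graph_acyclic E \<Longrightarrow> E' \<subseteq> E \<Longrightarrow> graph_acyclic E'"
  unfolding graph_acyclic_def is_cycle_def by blast

lemma forest_card_edges_le:
  assumes "finite E" "two_uniform E" "graph_acyclic E"
  shows "card E \<le> card (\<Union>E)"
  using assms
proof (induction "card E" arbitrary: E rule: less_induct)
  case less
  show ?case
  proof (cases "E = {}")
    case False
    have "\<not> (\<forall>v\<in>\<Union>E. 2 \<le> deg E v)"
      using min_deg_2_imp_cycle[OF less.prems(1,2) False] less.prems(3)
      unfolding graph_acyclic_def by blast
    then obtain v where v: "v \<in> \<Union>E" "deg E v < 2" by (meson not_le)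
    define Ev where "Ev = {e \<in> E. v \<notin> e}"
    have "E = Ev \<union> {e \<in> E. v \<in> e}" unfolding Ev_def by blast
    then have "card E \<le> card Ev + deg E v" unfolding deg_def by (metis card_Un_le)
    have "Ev \<subset> E" using v(1) unfolding Ev_def by blast
    then have "card Ev \<le> card (\<Union>Ev)"
      using less.prems two_uniform_subset[of E Ev] graph_acyclic_subset[of E Ev]
        psubset_card_mono[of E Ev] finite_subset[of Ev E]
      by (intro less.hyps) auto
    also have "\<dots> \<le> card (\<Union>E - {v})"
      using finite_Union_two_uniform[OF less.prems(1,2)] unfolding Ev_def by (intro card_mono) auto
    also have "\<dots> = card (\<Union>E) - 1" using v(1) by simp
    finally have "card Ev \<le> card (\<Union>E) - 1" .
    moreover have "0 < card (\<Union>E)"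
      using v(1) finite_Union_two_uniform[OF less.prems(1,2)] card_gt_0_iff by blast
    ultimately show ?thesis using \<open>card E \<le> card Ev + deg E v\<close> v(2) by linarith
  qed simp
qed

lemma forest_card_branch_vertices_le_card_leaves:
  assumes "finite E" "two_uniform E" "graph_acyclic E"
  shows "card {v \<in> \<Union>E. 3 \<le> deg E v} \<le> card {v \<in> \<Union>E. deg E v \<le> 1}"
proof -
  define W where "W = \<Union>E"
  define A where "A = {v \<in> W. 3 \<le> deg E v}"
  define B where "B = {v \<in> W. deg E v \<le> 1}"
  have fin: "finite W" using finite_Union_two_uniform[OF assms(1,2)] unfolding W_def .
  have count: "(\<Sum>v\<in>W. of_bool (v \<in> X)) = card X" if "X \<subseteq> W" for X
    using fin that by (simp add: Int_absorb1)
  have A_sub: "A \<subseteq> W" and B_sub: "B \<subseteq> W" unfolding A_def B_def by auto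
  have "2 + of_bool (v \<in> A) \<le> deg E v + of_bool (v \<in> B)" if "v \<in> W" for v
  proof -
    have "0 < deg E v" using that deg_pos_iff[OF assms(1)] unfolding W_def by blast
    then show ?thesis unfolding A_def B_def using that by auto
  qed
  then have "(\<Sum>v\<in>W. 2 + of_bool (v \<in> A)) \<le> (\<Sum>v\<in>W. deg E v + of_bool (v \<in> B))"
    by (rule sum_mono)
  moreover have "(\<Sum>v\<in>W. 2 + of_bool (v \<in> A)) = 2 * card W + card A"
    unfolding sum.distrib count[OF A_sub] by simp
  moreover have "(\<Sum>v\<in>W. deg E v + of_bool (v \<in> B)) = 2 * card E + card B"
    unfolding sum.distrib count[OF B_sub] handshake[OF assms(1,2), folded W_def] ..
  ultimately have "2 * card W + card A \<le> 2 * card E + card B" by simp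
  then show ?thesis using forest_card_edges_le[OF assms] unfolding A_def B_def W_def by linarith
qed

lemma pruned_result_simple_graph:
  assumes "simple_graph V E" "pruned_result V E V' E'"
  shows "simple_graph V' E'" "E' \<subseteq> E"
proof -
  have "prune_step\<^sup>*\<^sup>* (V, E) (V', E')" using assms(2) unfolding pruned_result_def ..
  then have "simple_graph V' E' \<and> E' \<subseteq> E"
  proof (induction rule: rtranclp_induct2)
    case (step V1 E1 V2 E2)
    from step.hyps(2) show ?case
    proof cases
      case (1 v)
      then show ?thesis using step.IH unfolding simple_graph_def by blast
    qed
  qed (use assms(1) in simp)
  then show "simple_graph V' E'" "E' \<subseteq> E" by auto
qed

lemma card_branch_or_feedback_vertices_le:
  assumes "simple_graph V E" "\<forall>v\<in>V. 2 \<le> deg E v"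
    and "graph_acyclic (E - F)" "finite F" "two_uniform F"
  shows "card ({v \<in> V. 3 \<le> deg (E - F) v} \<union> \<Union>F) \<le> 4 * card F"
proof -
  note E = simple_graphD[OF assms(1)]
  let ?T = "E - F"
  have T: "finite ?T" "two_uniform ?T" using E(1,2) two_uniform_subset[of E ?T] by auto
  have fin: "finite (\<Union>?T)" "finite (\<Union>F)" using finite_Union_two_uniform T assms(4,5) by auto
  have branch: "{v \<in> V. 3 \<le> deg ?T v} \<subseteq> {v \<in> \<Union>?T. 3 \<le> deg ?T v}"
    unfolding deg_pos_iff[OF T(1), symmetric] by auto
  have fin_branch: "finite {v \<in> \<Union>?T. 3 \<le> deg ?T v}" by (rule finite_subset[OF _ fin(1)]) blast
  have leaves: "{v \<in> \<Union>?T. deg ?T v \<le> 1} \<subseteq> \<Union>F"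
  proof
    fix v assume v: "v \<in> {v \<in> \<Union>?T. deg ?T v \<le> 1}"
    then have "2 \<le> deg E v" using E(3) assms(2) by blast
    then show "v \<in> \<Union>F" using v deg_Diff_eq[of v F E] by fastforce
  qed
  have "card ({v \<in> V. 3 \<le> deg ?T v} \<union> \<Union>F) \<le> card {v \<in> V. 3 \<le> deg ?T v} + card (\<Union>F)"
    by (rule card_Un_le)
  also have "\<dots> \<le> card {v \<in> \<Union>?T. 3 \<le> deg ?T v} + card (\<Union>F)"
    using card_mono[OF fin_branch branch] by (rule add_right_mono)
  also have "\<dots> \<le> card {v \<in> \<Union>?T. deg ?T v \<le> 1} + card (\<Union>F)"
    using forest_card_branch_vertices_le_card_leaves[OF T assms(3)] by simp
  also have "\<dots> \<le> 2 * card (\<Union>F)" using card_mono[OF fin(2) leaves] by simp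
  also have "\<dots> \<le> 4 * card F" using card_Union_two_uniform_le[OF assms(5)] by simp
  finally show ?thesis .
qed

lemma pruned_minus_feedback_forest:
  assumes "simple_graph V E" "feedback_edge_set E F" "pruned_result V E V' E'"
  shows "finite (E' - F)" "two_uniform (E' - F)" "graph_acyclic (E' - F)"
proof -
  have sub: "E' - F \<subseteq> E - F" using pruned_result_simple_graph[OF assms(1,3)] by blast
  note E = simple_graphD[OF assms(1)]
  show "finite (E' - F)" by (rule finite_subset[OF _ E(1)]) (use sub in blast)
  show "two_uniform (E' - F)" by (rule two_uniform_subset[OF E(2)]) (use sub in blast)
  show "graph_acyclic (E' - F)"
    using graph_acyclic_subset[OF _ sub] assms(2) unfolding feedback_edge_set_def by blast
qed

lemma card_branch_or_feedback_vertices_of_pruned: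
  assumes "simple_graph V E" "feedback_edge_set E F" "pruned_result V E V' E'"
  shows "card ({v \<in> V'. 3 \<le> deg (E' - F) v} \<union> \<Union>F) \<le> 4 * card F"
    and "finite ({v \<in> V'. 3 \<le> deg (E' - F) v} \<union> \<Union>F)"
proof -
  have F: "finite F" "two_uniform F"
    using simple_graphD[OF assms(1)] assms(2) finite_subset two_uniform_subset[of E F]
    unfolding feedback_edge_set_def by auto
  have G': "simple_graph V' E'" using pruned_result_simple_graph[OF assms(1,3)] by blast
  show "card ({v \<in> V'. 3 \<le> deg (E' - F) v} \<union> \<Union>F) \<le> 4 * card F"
    using assms(3) pruned_minus_feedback_forest[OF assms] unfolding pruned_result_def
    by (intro card_branch_or_feedback_vertices_le[OF G' _ _ F]) simp_all
  show "finite ({v \<in> V'. 3 \<le> deg (E' - F) v} \<union> \<Union>F)"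
    using G' F unfolding simple_graph_def by (simp add: finite_Union_two_uniform)
qed

lemma Union_path_edges: "2 \<le> length p \<Longrightarrow> \<Union>(path_edges p) = set p"
proof (induction p rule: induct_list012)
  case (3 a b p)
  then show ?case by (cases p) auto
qed simp_all

lemma deg_mono: "finite E' \<Longrightarrow> E \<subseteq> E' \<Longrightarrow> deg E v \<le> deg E' v"
  unfolding deg_def by (intro card_mono) auto

lemma deg_Un_disjoint:
  assumes "finite E" "finite E'" "E \<inter> E' = {}"
  shows "deg (E \<union> E') v = deg E v + deg E' v"
proof -
  have "{e \<in> E \<union> E'. v \<in> e} = {e \<in> E. v \<in> e} \<union> {e \<in> E'. v \<in> e}" by blast
  moreover have "card ({e \<in> E. v \<in> e} \<union> {e \<in> E'. v \<in> e}) = card {e \<in> E. v \<in> e} + card {e \<in> E'. v \<in> e}"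
    using assms by (intro card_Un_disjoint) auto
  ultimately show ?thesis unfolding deg_def by simp
qed

lemma C_path_ends:
  assumes "C_path T C p"
  shows "set p \<inter> C = {hd p, last p}" "hd p \<noteq> last p"
proof -
  have p: "2 \<le> length p" "distinct p" using assms unfolding C_path_def by auto
  have "p \<noteq> []" using p(1) by auto
  then have hd: "hd p = p ! 0" and last: "last p = p ! (length p - 1)"
    by (simp_all add: hd_conv_nth last_conv_nth)
  then show "hd p \<noteq> last p"
    using nth_eq_iff_index_eq[OF p(2), of 0 "length p - 1"] p(1) \<open>p \<noteq> []\<close> by simp
  have "v \<in> {hd p, last p}" if "v \<in> set p" "v \<in> C" for v
  proof -
    obtain a where a: "a < length p" "p ! a = v" using \<open>v \<in> set p\<close> by (meson in_set_conv_nth)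
    then have "\<not> (0 < a \<and> a < length p - 1)" using assms \<open>v \<in> C\<close> unfolding C_path_def by auto
    then have "a = 0 \<or> a = length p - 1" using a(1) by linarith
    then show ?thesis using a hd last by auto
  qed
  moreover have "{hd p, last p} \<subseteq> set p \<inter> C"
    using assms p unfolding C_path_def by (auto intro: hd_in_set last_in_set)
  ultimately show "set p \<inter> C = {hd p, last p}" by blast
qed

lemma card_path_edges_C_path:
  assumes "C_path T C p"
  shows "card (path_edges p) = card (set p - C) + 1"
proof -
  have p: "2 \<le> length p" "distinct p" using assms unfolding C_path_def by auto
  have "card (set p) = card (set p \<inter> C) + card (set p - C)" by (rule card_Int_Diff) simp
  moreover have "card (set p \<inter> C) = 2" using C_path_ends[OF assms] by simp
  ultimately show ?thesis using card_path_edges[OF p(2)] distinct_card[OF p(2)] p(1) by simp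
qed

lemma deg_path_edges_inner_vertex:
  assumes "C_path T C p" "v \<in> set p - C"
  shows "2 \<le> deg (path_edges p) v"
proof -
  have p: "distinct p" "hd p \<in> C" "last p \<in> C" "p \<noteq> []"
    using assms(1) unfolding C_path_def by auto
  obtain a where a: "a < length p" "p ! a = v" using assms(2) by (meson DiffD1 in_set_conv_nth)
  have "v \<noteq> hd p" "v \<noteq> last p" using assms(2) p(2,3) by auto
  then have "a \<noteq> 0" "a \<noteq> length p - 1"
    using a p(4) by (metis hd_conv_nth, metis last_conv_nth)
  then have "Suc (a - 1) = a" "Suc a < length p" using a(1) by auto
  then have edges: "{p ! (a - 1), v} \<in> path_edges p" "{v, p ! Suc a} \<in> path_edges p"
    using path_edges_nth[of "a - 1" p] path_edges_nth[of a p] a by auto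
  have "p ! (a - 1) \<noteq> p ! Suc a" "p ! (a - 1) \<noteq> v" "p ! Suc a \<noteq> v"
    using nth_eq_iff_index_eq[OF p(1)] a \<open>Suc (a - 1) = a\<close> \<open>Suc a < length p\<close> by auto
  then have two: "card {{p ! (a - 1), v}, {v, p ! Suc a}} = 2" by (auto simp: doubleton_eq_iff)
  have "{{p ! (a - 1), v}, {v, p ! Suc a}} \<subseteq> {e \<in> path_edges p. v \<in> e}" using edges by auto
  then have "card {{p ! (a - 1), v}, {v, p ! Suc a}} \<le> deg (path_edges p) v"
    unfolding deg_def by (intro card_mono) simp_all
  with two show ?thesis by simp
qed

lemma C_path_inner_vertices_disjoint:
  assumes "C_path T C p" "C_path T C q" "path_edges p \<inter> path_edges q = {}" "finite T"
    and "\<forall>v\<in>\<Union>T. 3 \<le> deg T v \<longrightarrow> v \<in> C"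
  shows "(set p - C) \<inter> (set q - C) = {}"
proof (rule ccontr)
  assume "(set p - C) \<inter> (set q - C) \<noteq> {}"
  then obtain v where v: "v \<in> set p - C" "v \<in> set q - C" by blast
  have sub: "path_edges p \<union> path_edges q \<subseteq> T" using assms(1,2) unfolding C_path_def by auto
  have "4 \<le> deg (path_edges p \<union> path_edges q) v"
    using deg_Un_disjoint[OF _ _ assms(3)] deg_path_edges_inner_vertex[OF assms(1) v(1)]
      deg_path_edges_inner_vertex[OF assms(2) v(2)] by simp
  also have "\<dots> \<le> deg T v" using deg_mono[OF assms(4) sub] .
  finally have "3 \<le> deg T v" by simp
  moreover have "v \<in> \<Union>T"
    unfolding deg_pos_iff[OF assms(4), symmetric] using \<open>3 \<le> deg T v\<close> by simp
  ultimately have "v \<in> C" using assms(5) by blast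
  then show False using v by blast
qed

lemma length_C_path_decomposition_le:
  assumes T: "finite T" "two_uniform T" "graph_acyclic T"
    and paths: "\<forall>p\<in>set Ps. C_path T C p"
    and disjoint: "\<forall>i<length Ps. \<forall>i'<length Ps. i \<noteq> i' \<longrightarrow>
      path_edges (Ps ! i) \<inter> path_edges (Ps ! i') = {}"
    and cover: "(\<Union>p\<in>set Ps. path_edges p) = T"
    and branch: "\<forall>v\<in>\<Union>T. 3 \<le> deg T v \<longrightarrow> v \<in> C"
  shows "length Ps \<le> card (\<Union>T \<inter> C)"
proof -
  define n where "n = length Ps"
  have P: "C_path T C (Ps ! i)" if "i < n" for i using paths that unfolding n_def by simp
  have set_Ps: "set Ps = (!) Ps ` {..<n}" unfolding n_def by (auto simp: in_set_conv_nth)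
  have finW: "finite (\<Union>T)" using finite_Union_two_uniform[OF T(1,2)] .
  have "\<Union>T = (\<Union>i<n. \<Union>(path_edges (Ps ! i)))" using cover unfolding set_Ps by blast
  also have "\<dots> = (\<Union>i<n. set (Ps ! i))"
  proof (rule SUP_cong)
    fix i assume "i \<in> {..<n}"
    then have "2 \<le> length (Ps ! i)" using P unfolding C_path_def by simp
    then show "\<Union>(path_edges (Ps ! i)) = set (Ps ! i)" by (rule Union_path_edges)
  qed simp
  finally have inner_vertices: "\<Union>T - C = (\<Union>i<n. set (Ps ! i) - C)" by blast
  have inner: "card (\<Union>T - C) = (\<Sum>i<n. card (set (Ps ! i) - C))"
    unfolding inner_vertices
    by (rule card_UN_disjoint)
      (use C_path_inner_vertices_disjoint[OF P P _ T(1) branch] disjoint in \<open>auto simp: n_def\<close>)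
  have edges: "T = (\<Union>i<n. path_edges (Ps ! i))" using cover unfolding set_Ps by simp
  have "card T = (\<Sum>i<n. card (path_edges (Ps ! i)))"
    unfolding edges by (rule card_UN_disjoint) (use disjoint in \<open>auto simp: n_def\<close>)
  also have "\<dots> = (\<Sum>i<n. card (set (Ps ! i) - C)) + n"
    using card_path_edges_C_path[OF P] by (simp add: sum_Suc)
  finally have "card T = card (\<Union>T - C) + n" using inner by simp
  moreover have "card (\<Union>T) = card (\<Union>T \<inter> C) + card (\<Union>T - C)"
    using finW by (rule card_Int_Diff)
  ultimately show ?thesis using forest_card_edges_le[OF T] unfolding n_def by linarith
qed

lemma tripling_bound:
  fixes a :: "nat \<Rightarrow> nat"
  assumes "\<forall>i<j. a (Suc i) + c \<le> 3 * (a i + c)"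
  shows "a j + c \<le> 3 ^ j * (a 0 + c)"
  using assms
proof (induction j)
  case (Suc j)
  then have "a (Suc j) + c \<le> 3 * (a j + c)" by simp
  also have "\<dots> \<le> 3 * (3 ^ j * (a 0 + c))" using Suc by simp
  finally show ?case by simp
qed simp

definition prefix_graph_vertices :: "'a set \<Rightarrow> 'a list list \<Rightarrow> nat \<Rightarrow> 'a set" where
  "prefix_graph_vertices C Ps i = C \<union> (\<Union>p\<in>set (take i Ps). set p)"

definition prefix_graph_edges :: "'a set set \<Rightarrow> 'a list list \<Rightarrow> nat \<Rightarrow> 'a set set" where
  "prefix_graph_edges F Ps i = F \<union> (\<Union>p\<in>set (take i Ps). path_edges p)"

lemma prefix_graph_vertices_Suc:
  "i < length Ps \<Longrightarrow> prefix_graph_vertices C Ps (Suc i) = prefix_graph_vertices C Ps i \<union> set (Ps ! i)"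
  unfolding prefix_graph_vertices_def by (auto simp: take_Suc_conv_app_nth)

lemma prefix_graph_edges_Suc:
  "i < length Ps \<Longrightarrow> prefix_graph_edges F Ps (Suc i) = prefix_graph_edges F Ps i \<union> path_edges (Ps ! i)"
  unfolding prefix_graph_edges_def by (auto simp: take_Suc_conv_app_nth)

lemma card_prefix_graph_edges:
  assumes "finite F" "i \<le> length Ps"
    and "\<forall>i'<length Ps. F \<inter> path_edges (Ps ! i') = {}"
    and "\<forall>i<length Ps. \<forall>i'<length Ps. i \<noteq> i' \<longrightarrow>
      path_edges (Ps ! i) \<inter> path_edges (Ps ! i') = {}"
  shows "card (prefix_graph_edges F Ps i) = card F + (\<Sum>i'<i. card (path_edges (Ps ! i')))"
  using assms(2)
proof (induction i)
  case 0
  then show ?case by (simp add: prefix_graph_edges_def)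
next
  case (Suc i)
  have "path_edges p \<inter> path_edges (Ps ! i) = {}" if p: "p \<in> set (take i Ps)" for p
  proof -
    obtain i' where "i' < i" "p = Ps ! i'" using p Suc.prems by (auto simp: in_set_conv_nth)
    then show ?thesis using assms(4) Suc.prems by auto
  qed
  moreover have "F \<inter> path_edges (Ps ! i) = {}" using assms(3) Suc.prems by simp
  ultimately have "prefix_graph_edges F Ps i \<inter> path_edges (Ps ! i) = {}"
    unfolding prefix_graph_edges_def by blast
  moreover have "finite (prefix_graph_edges F Ps i)"
    using assms(1) unfolding prefix_graph_edges_def by simp
  ultimately show ?case
    using Suc by (simp add: prefix_graph_edges_Suc card_Un_disjoint)
qed

lemma card_prefix_graph_vertices_le:
  assumes "finite C" "i \<le> length Ps" "\<forall>p\<in>set Ps. C_path T C p"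
  shows "card (prefix_graph_vertices C Ps i) \<le> card C + (\<Sum>i'<i. card (path_edges (Ps ! i')))"
  using assms(2)
proof (induction i)
  case 0
  then show ?case by (simp add: prefix_graph_vertices_def)
next
  case (Suc i)
  have "C \<subseteq> prefix_graph_vertices C Ps i" unfolding prefix_graph_vertices_def by blast
  then have "prefix_graph_vertices C Ps (Suc i) = prefix_graph_vertices C Ps i \<union> (set (Ps ! i) - C)"
    using prefix_graph_vertices_Suc[of i Ps C] Suc.prems by auto
  then have "card (prefix_graph_vertices C Ps (Suc i))
      \<le> card (prefix_graph_vertices C Ps i) + card (set (Ps ! i) - C)"
    by (simp add: card_Un_le)
  also have "\<dots> < card (prefix_graph_vertices C Ps i) + card (path_edges (Ps ! i))"
    using card_path_edges_C_path[of T C "Ps ! i"] assms(3) Suc.prems by simp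
  finally show ?case using Suc by simp
qed

lemma card_prefix_graph_vertices_le_pow:
  assumes "finite F" "finite C" "\<forall>p\<in>set Ps. C_path T C p"
    and "\<forall>i'<length Ps. F \<inter> path_edges (Ps ! i') = {}"
    and "\<forall>i<length Ps. \<forall>i'<length Ps. i \<noteq> i' \<longrightarrow>
      path_edges (Ps ! i) \<inter> path_edges (Ps ! i') = {}"
    and "j \<le> length Ps"
    and short: "\<forall>i<j. card (path_edges (Ps ! i)) \<le> 2 * (card (prefix_graph_edges F Ps i) + length Ps)"
  shows "card (prefix_graph_vertices C Ps j) \<le> card C + 3 ^ j * (card F + length Ps)"
proof -
  let ?S = "\<lambda>i. \<Sum>i'<i. card (path_edges (Ps ! i'))"
  let ?a = "\<lambda>i. card (prefix_graph_edges F Ps i)"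
  have a: "?a i = card F + ?S i" if "i \<le> length Ps" for i
    using card_prefix_graph_edges[OF assms(1) that assms(4,5)] .
  have "?a (Suc i) + length Ps \<le> 3 * (?a i + length Ps)" if "i < j" for i
  proof -
    have "card (path_edges (Ps ! i)) \<le> 2 * (?a i + length Ps)" using short that by blast
    then show ?thesis using a[of i] a[of "Suc i"] that assms(6) by simp
  qed
  then have "?a j + length Ps \<le> 3 ^ j * (?a 0 + length Ps)" by (intro tripling_bound) blast
  moreover have "?a 0 = card F" by (simp add: prefix_graph_edges_def)
  ultimately have "card F + ?S j + length Ps \<le> 3 ^ j * (card F + length Ps)"
    using a[OF assms(6)] by simp
  then show ?thesis using card_prefix_graph_vertices_le[OF assms(2,6,3)] by linarith
qed

lemma first_index_or_bound:
  fixes P :: "nat \<Rightarrow> bool"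
  assumes "j = (if \<exists>i<x. P i then LEAST i. i < x \<and> P i else x)"
  shows "j \<le> x \<and> (\<forall>i<j. \<not> P i)"
proof (cases "\<exists>i<x. P i")
  case True
  then have j: "j = (LEAST i. i < x \<and> P i)" using assms by simp
  then have "j < x" using LeastI_ex[of "\<lambda>i. i < x \<and> P i"] True by blast
  moreover have "\<not> P i" if "i < j" for i
  proof -
    have "\<not> (i < x \<and> P i)" using not_less_Least[of i "\<lambda>i. i < x \<and> P i"] j \<open>i < j\<close> by blast
    then show "\<not> P i" using \<open>i < j\<close> \<open>j < x\<close> by simp
  qed
  ultimately show ?thesis by simp
qed (use assms in auto)

theorem mainTheorem9:
  fixes V :: "'a set" and E :: "'a set set" and l k x :: nat
    and F :: "'a set set" and V' :: "'a set" and E' :: "'a set set"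
    and Ps :: "'a list list"
  assumes "simple_graph V E"
    and "l \<ge> 2"
    and "min_feedback_edge_set E F"
    and "card F = k"
    and "pruned_result V E V' E'"
  defines "ET \<equiv> E' - F"
  defines "C \<equiv> {v \<in> V'. deg ET v \<ge> 3} \<union> \<Union>F"
  assumes "length Ps = x"
    and "\<forall>p\<in>set Ps. C_path ET C p"
    and "\<forall>i<x. \<forall>i'<x. i \<noteq> i' \<longrightarrow> path_edges (Ps ! i) \<inter> path_edges (Ps ! i') = {}"
    and "(\<Union>p\<in>set Ps. path_edges p) = ET"
    and "sorted (map (\<lambda>p. card (path_edges p)) Ps)"
  defines "GV \<equiv> (\<lambda>i. C \<union> (\<Union>p\<in>set (take i Ps). set p))"
  defines "GE \<equiv> (\<lambda>i. F \<union> (\<Union>p\<in>set (take i Ps). path_edges p))"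
  defines "j \<equiv> (if \<exists>i<x. card (path_edges (Ps ! i)) > 2 * (card (GE i) + x)
               then (LEAST i. i < x \<and> card (path_edges (Ps ! i)) > 2 * (card (GE i) + x))
               else x)"
  shows "card (GV j) \<le> 10 * k * 81 ^ k"
proof -
  have fes: "feedback_edge_set E F" using assms(3) unfolding min_feedback_edge_set_def by blast
  have "finite F" using fes simple_graphD(1)[OF assms(1)] finite_subset
    unfolding feedback_edge_set_def by blast
  note ET = pruned_minus_feedback_forest[OF assms(1) fes assms(5), folded ET_def]
  note C = card_branch_or_feedback_vertices_of_pruned[OF assms(1) fes assms(5), folded ET_def, folded C_def]
  have "\<Union>ET \<subseteq> V'" using simple_graphD(3)[OF pruned_result_simple_graph(1)[OF assms(1,5)]]
    unfolding ET_def by blast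
  then have "\<forall>v\<in>\<Union>ET. 3 \<le> deg ET v \<longrightarrow> v \<in> C" unfolding C_def by blast
  then have "x \<le> card (\<Union>ET \<inter> C)"
    using length_C_path_decomposition_le[OF ET assms(9) _ assms(11)] assms(8,10) by simp
  also have "\<dots> \<le> card C" by (intro card_mono[OF C(2)]) blast
  finally have x: "x \<le> 4 * k" using C(1) assms(4) by simp
  have GV: "GV = prefix_graph_vertices C Ps" and GE: "GE = prefix_graph_edges F Ps"
    unfolding GV_def GE_def prefix_graph_vertices_def prefix_graph_edges_def by auto
  have j: "j \<le> x" "\<forall>i<j. card (path_edges (Ps ! i)) \<le> 2 * (card (GE i) + x)"
    using first_index_or_bound[OF j_def[THEN meta_eq_to_obj_eq]] by auto
  have "\<forall>i'<x. F \<inter> path_edges (Ps ! i') = {}" using assms(8,11) unfolding ET_def by auto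
  then have "card (GV j) \<le> card C + 3 ^ j * (k + x)"
    using card_prefix_graph_vertices_le_pow[OF \<open>finite F\<close> C(2) assms(9)] assms(4,8,10) j
    unfolding GV GE by simp
  also have "\<dots> \<le> 4 * k + 3 ^ (4 * k) * (5 * k)"
    using C(1) assms(4) x j(1) power_increasing[of j "4 * k" "3::nat"] by (intro add_mono mult_le_mono) auto
  also have "\<dots> \<le> 10 * k * 81 ^ k"
  proof -
    have "(4::nat) \<le> 5 * 81 ^ k" using one_le_power[of "81::nat" k] by linarith
    then show ?thesis by (simp add: power_mult)
  qed
  finally show ?thesis .
qed

end
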